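(* Let $F\in\{\mathbb{R},\mathbb{C}\}$ and let $\pi$ be an irreducible unitary representation of $G_n=GL(n,F)$. Then there is a decomposition $n=k+l$ with $k,l\ge0$, an even irreducible unitary representation $\pi_e$ of $G_k$ and an odd irreducible unitary representation $\pi_o$ of $G_l$, uniquely determined up to isomorphism, such that $\pi\simeq\pi_e\times\pi_o$.
   Context: Normalized parabolic induction: for Hilbert representations $\sigma_i$ of $G_{n_i}$, $\sigma_1\times\dots\times\sigma_k$ is the normalized induction to $G_{n_1+\dots+n_k}$ from the standard block upper triangular parabolic of type $(n_1,\dots,n_k)$ of $\sigma_1\otimes\dots\otimes\sigma_k$. $|\ |^s\sigma$ means $g\mapsto|\det g|^s\sigma(g)$. For a square-integrable $\delta$ in the unitary dual of $G_r$ and $t\ge1$, $U(\delta,t)$ is the unique irreducible quotient of $|\ |^{\frac{t-1}2}\delta\times|\ |^{\frac{t-3}2}\delta\times\dots\times|\ |^{\frac{1-t}2}\delta$; for $0<\alpha<\frac12$, $\pi(\delta,t,\alpha)=|\ |^{\alpha}U(\delta,t)\times|\ |^{-\alpha}U(\delta,t)$. Let $B$ be the set of all such representations. Every irreducible unitary $\pi$ of $G_n$ is $\pi_1\times\dots\times\pi_k$ for a unique multiset $\{\pi_i\}\subset B$, and products of elements of $B$ are irreducible unitary. The $SL(2)$-type $\mathcal{V}(\pi)$ is the partition of $n$ with: $\mathcal{V}(U(\delta,t))$ = $r$ parts equal to $t$; $\mathcal{V}(\pi(\delta,t,\alpha))$ = $2r$ parts equal to $t$; $\mathcal{V}(\pi_1\times\pi_2)$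 = multiset union of $\mathcal{V}(\pi_1),\mathcal{V}(\pi_2)$. $\pi$ is called even (resp. odd) if all parts of $\mathcal{V}(\pi)$ are even (resp. odd). The trivial representation of $G_0$ is allowed (so $k$ or $l$ may be $0$). *)

theory Defs
  imports Complex_Main "HOL-Library.Multiset"
begin

text \<open>Abstract model of the unitary dual of GL(n,F), F = R or C, via the classification
recalled in the context.  The type 'd stands for (isomorphism classes of) square-integrable
representations delta in the unitary dual of some G_r, and deg delta = r.
An element of B is either U(delta,t) or pi(delta,t,alpha).  An irreducible unitary
representation of G_n, up to isomorphism, is the (unique) finite multiset of elements of B
whose product it is; products are multiset sums.\<close>

datatype 'd bsummand = U 'd nat | Pi 'd nat real

fun valid_B :: "('d \<Rightarrow> nat) \<Rightarrow> 'd bsummand \<Rightarrow> bool" where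
  "valid_B deg (U d t) = (t \<ge> 1)"
| "valid_B deg (Pi d t a) = (t \<ge> 1 \<and> 0 < a \<and> a < 1/2)"

text \<open>The n such that the B-element is a representation of G_n.\<close>
fun bdeg :: "('d \<Rightarrow> nat) \<Rightarrow> 'd bsummand \<Rightarrow> nat" where
  "bdeg deg (U d t) = deg d * t"
| "bdeg deg (Pi d t a) = 2 * deg d * t"

text \<open>SL(2)-type of a B-element, as a multiset of parts.\<close>
fun V_B :: "('d \<Rightarrow> nat) \<Rightarrow> 'd bsummand \<Rightarrow> nat multiset" where
  "V_B deg (U d t) = replicate_mset (deg d) t"
| "V_B deg (Pi d t a) = replicate_mset (2 * deg d) t"

definition unitary_irrep :: "('d \<Rightarrow> nat) \<Rightarrow> nat \<Rightarrow> 'd bsummand multiset \<Rightarrow> bool" where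
  "unitary_irrep deg n M \<longleftrightarrow> (\<forall>b\<in>#M. valid_B deg b) \<and> sum_mset (image_mset (bdeg deg) M) = n"

definition ind_prod :: "'d bsummand multiset \<Rightarrow> 'd bsummand multiset \<Rightarrow> 'd bsummand multiset" where
  "ind_prod M1 M2 = M1 + M2"

definition sl2type :: "('d \<Rightarrow> nat) \<Rightarrow> 'd bsummand multiset \<Rightarrow> nat multiset" where
  "sl2type deg M = sum_mset (image_mset (V_B deg) M)"

definition even_rep :: "('d \<Rightarrow> nat) \<Rightarrow> 'd bsummand multiset \<Rightarrow> bool" where
  "even_rep deg M \<longleftrightarrow> (\<forall>p\<in>#sl2type deg M. even p)"

definition odd_rep :: "('d \<Rightarrow> nat) \<Rightarrow> 'd bsummand multiset \<Rightarrow> bool" where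
  "odd_rep deg M \<longleftrightarrow> (\<forall>p\<in>#sl2type deg M. odd p)"

end

theory Submission
  imports Defs
begin

text \<open>By the classification, \<pi> is the product of a unique multiset of elements of B, and
each element of B has an SL(2)-type all of whose parts equal its parameter t. Hence \<pi> is
even (odd) exactly when all its factors have even (odd) t, and the decomposition is forced:
\<pi>e collects the factors with even t, \<pi>o those with odd t.\<close>

fun sl2_part :: "'d bsummand \<Rightarrow> nat" where
  "sl2_part (U d t) = t"
| "sl2_part (Pi d t a) = t"

lemma set_mset_V_B:
  assumes "\<forall>d. deg d \<ge> 1"
  shows "set_mset (V_B deg b) = {sl2_part b}"
  using assms by (cases b) (auto simp: Suc_le_eq)

lemma set_mset_sl2type: "set_mset (sl2type deg M) = (\<Union>b\<in>set_mset M. set_mset (V_B deg b))"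
  unfolding sl2type_def by (induction M) auto

lemma even_rep_iff:
  assumes "\<forall>d. deg d \<ge> 1"
  shows "even_rep deg M \<longleftrightarrow> (\<forall>b\<in>#M. even (sl2_part b))"
  unfolding even_rep_def set_mset_sl2type set_mset_V_B[OF assms] by auto

lemma odd_rep_iff:
  assumes "\<forall>d. deg d \<ge> 1"
  shows "odd_rep deg M \<longleftrightarrow> (\<forall>b\<in>#M. odd (sl2_part b))"
  unfolding odd_rep_def set_mset_sl2type set_mset_V_B[OF assms] by auto

lemma unitary_irrep_plus_iff:
  "unitary_irrep deg n (A + B) \<longleftrightarrow>
     unitary_irrep deg (\<Sum>b\<in>#A. bdeg deg b) A \<and> unitary_irrep deg (\<Sum>b\<in>#B. bdeg deg b) B
     \<and> n = (\<Sum>b\<in>#A. bdeg deg b) + (\<Sum>b\<in>#B. bdeg deg b)"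
  unfolding unitary_irrep_def by auto

lemma ex1_mset_split_by_predicate:
  "\<exists>!(A, B). M = A + B \<and> (\<forall>x\<in>#A. P x) \<and> (\<forall>x\<in>#B. \<not> P x)"
proof (rule ex1I)
  show "case (filter_mset P M, filter_mset (Not \<circ> P) M) of (A, B) \<Rightarrow>
          M = A + B \<and> (\<forall>x\<in>#A. P x) \<and> (\<forall>x\<in>#B. \<not> P x)"
    by (simp add: multiset_partition[symmetric] comp_def)
next
  fix AB :: "'a multiset \<times> 'a multiset"
  assume "case AB of (A, B) \<Rightarrow> M = A + B \<and> (\<forall>x\<in>#A. P x) \<and> (\<forall>x\<in>#B. \<not> P x)"
  then obtain A B where "AB = (A, B)" "M = A + B" "\<forall>x\<in>#A. P x" "\<forall>x\<in>#B. \<not> P x"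
    by (cases AB) auto
  moreover have "filter_mset P A = A" "filter_mset (Not \<circ> P) B = B"
    using \<open>\<forall>x\<in>#A. P x\<close> \<open>\<forall>x\<in>#B. \<not> P x\<close> by (simp_all add: filter_mset_eq_conv)
  moreover have "filter_mset P B = {#}" "filter_mset (Not \<circ> P) A = {#}"
    using \<open>\<forall>x\<in>#A. P x\<close> \<open>\<forall>x\<in>#B. \<not> P x\<close> by auto
  ultimately show "AB = (filter_mset P M, filter_mset (Not \<circ> P) M)"
    by simp
qed

lemma even_odd_decomposition_iff:
  assumes "\<forall>d. deg d \<ge> 1" and "unitary_irrep deg n \<pi>"
  shows "(k + l = n \<and> unitary_irrep deg k A \<and> even_rep deg A
            \<and> unitary_irrep deg l B \<and> odd_rep deg B \<and> \<pi> = ind_prod A B)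
         \<longleftrightarrow> k = (\<Sum>b\<in>#A. bdeg deg b) \<and> l = (\<Sum>b\<in>#B. bdeg deg b)
            \<and> \<pi> = A + B \<and> (\<forall>b\<in>#A. even (sl2_part b)) \<and> (\<forall>b\<in>#B. \<not> even (sl2_part b))"
  using assms(2) unitary_irrep_plus_iff[of deg n A B]
  unfolding even_rep_iff[OF assms(1)] odd_rep_iff[OF assms(1)] ind_prod_def
  by (auto simp: unitary_irrep_def)

theorem corollary2p8:
  fixes deg :: "'d \<Rightarrow> nat" and n :: nat and \<pi> :: "'d bsummand multiset"
  assumes "\<forall>d. deg d \<ge> 1"
    and "unitary_irrep deg n \<pi>"
  shows "\<exists>!(k, l, \<pi>e, \<pi>o). k + l = n
           \<and> unitary_irrep deg k \<pi>e \<and> even_rep deg \<pi>e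
           \<and> unitary_irrep deg l \<pi>o \<and> odd_rep deg \<pi>o
           \<and> \<pi> = ind_prod \<pi>e \<pi>o"
proof -
  let ?split = "\<lambda>A B. \<pi> = A + B \<and> (\<forall>b\<in>#A. even (sl2_part b)) \<and> (\<forall>b\<in>#B. \<not> even (sl2_part b))"
  obtain A B where split: "?split A B" and split_unique: "\<And>A' B'. ?split A' B' \<Longrightarrow> A' = A \<and> B' = B"
    using ex1_mset_split_by_predicate[of \<pi> "\<lambda>b. even (sl2_part b)"] by (auto elim!: ex1E) blast
  let ?dim = "\<lambda>M. \<Sum>b\<in>#M. bdeg deg b"
  show ?thesis
  proof (rule ex1I[of _ "(?dim A, ?dim B, A, B)"])
    show "case (?dim A, ?dim B, A, B) of (k, l, \<pi>e, \<pi>o) \<Rightarrow> k + l = n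
           \<and> unitary_irrep deg k \<pi>e \<and> even_rep deg \<pi>e
           \<and> unitary_irrep deg l \<pi>o \<and> odd_rep deg \<pi>o \<and> \<pi> = ind_prod \<pi>e \<pi>o"
      unfolding prod.case even_odd_decomposition_iff[OF assms] using split by simp
  next
    fix x
    assume "case x of (k, l, \<pi>e, \<pi>o) \<Rightarrow> k + l = n
           \<and> unitary_irrep deg k \<pi>e \<and> even_rep deg \<pi>e
           \<and> unitary_irrep deg l \<pi>o \<and> odd_rep deg \<pi>o \<and> \<pi> = ind_prod \<pi>e \<pi>o"
    then show "x = (?dim A, ?dim B, A, B)"
      using split_unique by (cases x) (simp only: prod.case even_odd_decomposition_iff[OF assms]; blast)
  qed
qed

end
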